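(* Let $|\psi_{{\sf A}{\sf B}}\rangle\in\mathbb C^{d_{\sf A}}\otimes\mathbb C^{d_{\sf B}}$ be a unit vector, $\rho_{\sf A}=\mathrm{tr}_{\sf B}(|\psi_{{\sf A}{\sf B}}\rangle\langle\psi_{{\sf A}{\sf B}}|)$, and $\bar\omega_{\sf A}=\mathrm{tr}_{\sf B}\big(S_{\sf B}|\psi_{{\sf A}{\sf B}}\rangle\langle\psi_{{\sf A}{\sf B}}|^{\otimes2}\big)+\frac{S_{\sf A}}{\mathrm{tr}S_{\sf A}}\,\mathrm{tr}\big(A_{\sf A}A_{\sf B}|\psi_{{\sf A}{\sf B}}\rangle\langle\psi_{{\sf A}{\sf B}}|^{\otimes2}\big)$. Then $\bar\omega_{\sf A}=S_{\sf A}(\rho_{\sf A}\otimes\rho_{\sf A})S_{\sf A}+\big(1-\mathrm{tr}(S_{\sf A}(\rho_{\sf A}\otimes\rho_{\sf A})S_{\sf A})\big)\tilde S_{\sf A}$.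
   Context: $|\psi_{{\sf A}{\sf B}}\rangle^{\otimes2}$ is regarded as a vector in $\mathbb C^{d_{\sf A}}_1\otimes\mathbb C^{d_{\sf B}}_2\otimes\mathbb C^{d_{\sf A}}_3\otimes\mathbb C^{d_{\sf B}}_4$; $\mathrm{tr}_{\sf B}$ is the partial trace over factors $2,4$. $S_{\sf A}$, $A_{\sf A}$ are the projectors onto the symmetric and antisymmetric subspaces of $\mathbb C^{d_{\sf A}}_1\otimes\mathbb C^{d_{\sf A}}_3$; $S_{\sf B}$, $A_{\sf B}$ those of $\mathbb C^{d_{\sf B}}_2\otimes\mathbb C^{d_{\sf B}}_4$ (extended by identities where needed); $\tilde S_{\sf A}=S_{\sf A}/\mathrm{tr}S_{\sf A}$. *)

theory Defs
  imports Complex_Main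
begin

text \<open>The Hilbert space
  C^d is represented by functions from a finite index type to complex;
  operators are represented by their matrix entries (functions of row and
  column index).  The factor C^{dA} has index type 'a (dA = CARD('a)),
  C^{dB} has index type 'b.  The four-fold tensor space 1 (x) 2 (x) 3 (x) 4 =
  A (x) B (x) A (x) B has index type 'a \<times> 'b \<times> 'a \<times> 'b.\<close>

type_synonym ('i) op = "'i \<Rightarrow> 'i \<Rightarrow> complex"

definition op_mult :: "('i::finite) op \<Rightarrow> 'i op \<Rightarrow> 'i op" where
  "op_mult M N = (\<lambda>p q. \<Sum>r\<in>UNIV. M p r * N r q)"

definition op_trace :: "('i::finite) op \<Rightarrow> complex" where
  "op_trace M = (\<Sum>p\<in>UNIV. M p p)"

definition op_add :: "'i op \<Rightarrow> 'i op \<Rightarrow> 'i op" where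
  "op_add M N = (\<lambda>p q. M p q + N p q)"

definition op_scale :: "complex \<Rightarrow> 'i op \<Rightarrow> 'i op" where
  "op_scale c M = (\<lambda>p q. c * M p q)"

definition ketbra :: "('i \<Rightarrow> complex) \<Rightarrow> 'i op" where
  "ketbra v = (\<lambda>p q. v p * cnj (v q))"

definition op_tensor :: "'a op \<Rightarrow> 'a op \<Rightarrow> ('a \<times> 'a) op" where
  "op_tensor M N = (\<lambda>(i, j) (k, l). M i k * N j l)"

definition sym_proj :: "('a \<times> 'a) op" where
  "sym_proj = (\<lambda>(i, j) (k, l).
     ((if i = k \<and> j = l then 1 else 0) + (if i = l \<and> j = k then 1 else 0)) / 2)"

definition antisym_proj :: "('a \<times> 'a) op" where
  "antisym_proj = (\<lambda>(i, j) (k, l).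
     ((if i = k \<and> j = l then 1 else 0) - (if i = l \<and> j = k then 1 else 0)) / 2)"

definition ket_sq :: "('a \<times> 'b \<Rightarrow> complex) \<Rightarrow> ('a \<times> 'b \<times> 'a \<times> 'b) \<Rightarrow> complex" where
  "ket_sq \<psi> = (\<lambda>(a1, b2, a3, b4). \<psi> (a1, b2) * \<psi> (a3, b4))"

definition lift_A :: "('a \<times> 'a) op \<Rightarrow> ('a \<times> 'b \<times> 'a \<times> 'b) op" where
  "lift_A M = (\<lambda>(a1, b2, a3, b4) (a1', b2', a3', b4').
     (if b2 = b2' \<and> b4 = b4' then M (a1, a3) (a1', a3') else 0))"

definition lift_B :: "('b \<times> 'b) op \<Rightarrow> ('a \<times> 'b \<times> 'a \<times> 'b) op" where
  "lift_B M = (\<lambda>(a1, b2, a3, b4) (a1', b2', a3', b4').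
     (if a1 = a1' \<and> a3 = a3' then M (b2, b4) (b2', b4') else 0))"

definition ptrace_B24 :: "('a \<times> ('b::finite) \<times> 'a \<times> 'b) op \<Rightarrow> ('a \<times> 'a) op" where
  "ptrace_B24 X = (\<lambda>(a1, a3) (a1', a3'). \<Sum>b2\<in>UNIV. \<Sum>b4\<in>UNIV. X (a1, b2, a3, b4) (a1', b2, a3', b4))"

definition ptrace_B :: "('a \<times> ('b::finite)) op \<Rightarrow> 'a op" where
  "ptrace_B X = (\<lambda>a a'. \<Sum>b\<in>UNIV. X (a, b) (a', b))"

end

theory Submission
  imports Defs
begin

text \<open>Contracting the symmetrizer
  on the B-factors of two copies of the state gives
  \<open>(\<rho>(a\<^sub>1,c\<^sub>1) \<rho>(a\<^sub>3,c\<^sub>3) + \<rho>(a\<^sub>1,c\<^sub>3) \<rho>(a\<^sub>3,c\<^sub>1)) / 2\<close>, which is also the entry of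
  \<open>S\<^sub>A (\<rho> \<otimes> \<rho>) S\<^sub>A\<close>.  The traces are scalars:
  \<open>tr (A\<^sub>A A\<^sub>B |\<psi>\<rangle>\<langle>\<psi>|\<^sup>\<otimes>\<^sup>2) = (1 - tr \<rho>\<^sup>2) / 2\<close> and
  \<open>tr (S\<^sub>A (\<rho> \<otimes> \<rho>) S\<^sub>A) = ((tr \<rho>)\<^sup>2 + tr \<rho>\<^sup>2) / 2 = (1 + tr \<rho>\<^sup>2) / 2\<close>,
  so the coefficient of \<open>S\<^sub>A\<close> is exactly \<open>1 - tr (S\<^sub>A (\<rho> \<otimes> \<rho>) S\<^sub>A)\<close>.\<close>

lemma sum_UNIV_prod:
  "(\<Sum>p\<in>(UNIV::('x::finite \<times> 'y::finite) set). f p) = (\<Sum>x\<in>UNIV. \<Sum>y\<in>UNIV. f (x, y))"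
  by (simp add: sum.cartesian_product case_prod_unfold flip: UNIV_Times_UNIV)

lemma if_conj_then_else_zero:
  "(if A \<and> B then x else (0::'z::zero)) = (if A then if B then x else 0 else 0)"
  by simp

lemma sum_if_const_zero:
  "(\<Sum>y\<in>A. if P then f y else (0::'z::comm_monoid_add)) = (if P then sum f A else 0)"
  by simp

text \<open>Splitting conjunctive Kronecker deltas into nested ones lets \<open>sum.delta\<close> eliminate
  the summations of a coordinate computation one index at a time.\<close>

lemmas entry_simps =
  sum_UNIV_prod if_conj_then_else_zero sum_if_const_zero ring_distribs
  if_distrib[where f="\<lambda>x. x * _"] if_distrib[where f="\<lambda>x. _ * x"] if_distrib[where f="\<lambda>x. x / _"]
  sum.distrib sum_subtractf sum_divide_distrib add_divide_distrib diff_divide_distrib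

lemma op_trace_ketbra:
  "op_trace (ketbra (v :: 'i::finite \<Rightarrow> complex)) = of_real (\<Sum>p\<in>UNIV. (cmod (v p))\<^sup>2)"
  unfolding op_trace_def ketbra_def of_real_sum complex_norm_square ..

lemma op_trace_ptrace_B: "op_trace (ptrace_B X) = op_trace (X :: ('a::finite \<times> 'b::finite) op)"
  by (simp add: op_trace_def ptrace_B_def sum_UNIV_prod)

lemma sym_proj_tensor_sym_proj_apply:
  fixes r :: "'a::finite op"
  shows "op_mult (op_mult sym_proj (op_tensor r r)) sym_proj (i, j) (k, l)
    = (r i k * r j l + r i l * r j k) / 2"
  by (simp add: op_mult_def op_tensor_def sym_proj_def entry_simps cong: if_cong)

lemma op_trace_sym_proj_tensor_sym_proj:
  fixes r :: "'a::finite op"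
  shows "op_trace (op_mult (op_mult sym_proj (op_tensor r r)) sym_proj)
    = ((op_trace r)\<^sup>2 + op_trace (op_mult r r)) / 2"
  by (simp add: op_trace_def op_mult_def[of r r] sum_UNIV_prod sym_proj_tensor_sym_proj_apply
      sum.distrib sum_divide_distrib add_divide_distrib power2_eq_square sum_product)

lemma ptrace_B24_sym_proj_ket_sq_apply:
  fixes \<psi> :: "'a::finite \<times> 'b::finite \<Rightarrow> complex"
  defines "\<rho> \<equiv> ptrace_B (ketbra \<psi>)"
  shows "ptrace_B24 (op_mult (lift_B sym_proj) (ketbra (ket_sq \<psi>))) (i, j) (k, l)
    = (\<rho> i k * \<rho> j l + \<rho> i l * \<rho> j k) / 2"
  unfolding \<rho>_def
  by (simp add: ptrace_B24_def op_mult_def lift_B_def sym_proj_def ketbra_def ket_sq_def ptrace_B_def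
      entry_simps sum_product cong: if_cong)
    (subst (2) sum.swap, simp add: mult_ac)

lemma ptrace_B24_sym_proj_ket_sq:
  fixes \<psi> :: "'a::finite \<times> 'b::finite \<Rightarrow> complex"
  defines "\<rho> \<equiv> ptrace_B (ketbra \<psi>)"
  shows "ptrace_B24 (op_mult (lift_B sym_proj) (ketbra (ket_sq \<psi>)))
    = op_mult (op_mult sym_proj (op_tensor \<rho> \<rho>)) sym_proj"
  by (intro ext, clarify)
    (simp only: \<rho>_def ptrace_B24_sym_proj_ket_sq_apply sym_proj_tensor_sym_proj_apply)

lemma op_trace_antisym_proj_antisym_proj_ket_sq:
  fixes \<psi> :: "'a::finite \<times> 'b::finite \<Rightarrow> complex"
  defines "\<rho> \<equiv> ptrace_B (ketbra \<psi>)"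
  shows "op_trace (op_mult (op_mult (lift_A antisym_proj) (lift_B antisym_proj)) (ketbra (ket_sq \<psi>)))
    = ((op_trace (ketbra \<psi>))\<^sup>2 - op_trace (op_mult \<rho> \<rho>)) / 2"
proof -
  have norm_sq: "(op_trace (ketbra \<psi>))\<^sup>2
    = (\<Sum>a\<in>UNIV. \<Sum>b\<in>UNIV. \<Sum>a'\<in>UNIV. \<Sum>b'\<in>UNIV.
         \<psi> (a, b) * \<psi> (a', b') * (cnj (\<psi> (a, b)) * cnj (\<psi> (a', b'))))"
    unfolding op_trace_def ketbra_def power2_eq_square sum_product by (simp add: sum_UNIV_prod mult_ac)
  have "op_trace (op_mult \<rho> \<rho>)
      = (\<Sum>a\<in>UNIV. \<Sum>a'\<in>UNIV. \<Sum>b'\<in>UNIV. \<Sum>b\<in>UNIV.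
           \<psi> (a', b) * \<psi> (a, b') * (cnj (\<psi> (a, b)) * cnj (\<psi> (a', b'))))"
    by (simp add: \<rho>_def op_trace_def op_mult_def ptrace_B_def ketbra_def sum_product mult_ac)
  also have "\<dots> = (\<Sum>a\<in>UNIV. \<Sum>a'\<in>UNIV. \<Sum>b\<in>UNIV. \<Sum>b'\<in>UNIV.
           \<psi> (a', b) * \<psi> (a, b') * (cnj (\<psi> (a, b)) * cnj (\<psi> (a', b'))))"
    by (rule sum.cong[OF refl], rule sum.cong[OF refl], rule sum.swap)
  also have "\<dots> = (\<Sum>a\<in>UNIV. \<Sum>b\<in>UNIV. \<Sum>a'\<in>UNIV. \<Sum>b'\<in>UNIV.
           \<psi> (a', b) * \<psi> (a, b') * (cnj (\<psi> (a, b)) * cnj (\<psi> (a', b'))))"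
    by (rule sum.cong[OF refl], rule sum.swap)
  finally have purity: "op_trace (op_mult \<rho> \<rho>) = \<dots>" .
  show ?thesis
    unfolding norm_sq purity
    by (simp add: op_trace_def op_mult_def lift_A_def lift_B_def antisym_proj_def ketbra_def ket_sq_def
        entry_simps mult_ac cong: if_cong)
      (simp add: sum_divide_distrib[symmetric])
qed

theorem mainTheorem9:
  fixes \<psi> :: "'a::finite \<times> 'b::finite \<Rightarrow> complex"
  assumes unit: "(\<Sum>p\<in>UNIV. (cmod (\<psi> p))\<^sup>2) = 1"
  defines "\<rho>A \<equiv> ptrace_B (ketbra \<psi>)"
    and "SA \<equiv> (sym_proj :: ('a \<times> 'a) op)"
    and "AA \<equiv> (antisym_proj :: ('a \<times> 'a) op)"
    and "SB \<equiv> (sym_proj :: ('b \<times> 'b) op)"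
    and "AB \<equiv> (antisym_proj :: ('b \<times> 'b) op)"
    and "P \<equiv> ketbra (ket_sq \<psi>)"
  defines "\<omega> \<equiv> op_add (ptrace_B24 (op_mult (lift_B SB) P))
                  (op_scale (op_trace (op_mult (op_mult (lift_A AA) (lift_B AB)) P) / op_trace SA) SA)"
  shows "\<omega> = op_add (op_mult (op_mult SA (op_tensor \<rho>A \<rho>A)) SA)
                   (op_scale ((1 - op_trace (op_mult (op_mult SA (op_tensor \<rho>A \<rho>A)) SA)) / op_trace SA) SA)"
proof -
  have tr_psi: "op_trace (ketbra \<psi>) = 1"
    using unit by (simp add: op_trace_ketbra)
  then have tr_rho: "op_trace \<rho>A = 1"
    by (simp add: \<rho>A_def op_trace_ptrace_B)
  have "op_trace (op_mult (op_mult (lift_A AA) (lift_B AB)) P)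
      = 1 - op_trace (op_mult (op_mult SA (op_tensor \<rho>A \<rho>A)) SA)"
    by (simp add: AA_def AB_def P_def SA_def op_trace_antisym_proj_antisym_proj_ket_sq
        op_trace_sym_proj_tensor_sym_proj tr_psi tr_rho flip: \<rho>A_def) (simp add: field_simps)
  then show ?thesis
    by (simp add: \<omega>_def SB_def P_def SA_def ptrace_B24_sym_proj_ket_sq flip: \<rho>A_def)
qed

end
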